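(* Let $\{x_k\}$ be the random sequence generated by the GSKM algorithm. Take $-1 < \xi \leq 0$ and $0 < \delta < \frac{2(1+\xi)}{1-2\xi}$. Define $\bar{x}_k = \frac{1}{k}\sum_{l=1}^{k} x_l$. Then $$\mathbb{E}[f(\bar{x}_k)] \leq \frac{(1+\xi)(1+\xi-2\delta\xi\mu_2)\, d(x_0,P)^2 + 2\xi\delta(\delta\xi-\delta-1) f(x_0)}{2\delta k(2+2\xi+2\delta\xi-\delta)}.$$
   Context: Linear feasibility problem $Ax \leq b$ with $A \in \mathbb{R}^{m\times n}$, $b \in \mathbb{R}^m$, assumed consistent, with rows $a_i^T$ normalized ($\|a_i\|=1$). $P = \{x : Ax \leq b\}$, $\mathcal{P}(x)$ the Euclidean projection onto $P$, $d(x,P) = \|x-\mathcal{P}(x)\|$. Sampling: at each iteration a set $\tau$ of $\beta$ rows is chosen uniformly at random among all $\binom{m}{\beta}$ subsets and $i^* = \arg\max_{i\in\tau}(a_i^Tx-b_i)^+$; $\mathbb{E}_{\mathbb{S}}$ denotes expectation over this sampling. $f(x) = \mathbb{E}_{\mathbb{S}}\big[\tfrac12|(a_{i^*}^Tx-b_{i^*})^+|^2\big]$. $\mu_2 = \min\{1, \frac{\beta}{m}\lambda_{\max}(A^TA)\}$. GSKM algorithm: $x_1 = x_0$, $z_1 = z_0$; for $k\ge1$, $z_k = x_k - \delta(a_{i^*}^Tx_k-b_{i^*})^+a_{i^*}$ (with $i^*$ chosen by the sampling rule at $x_k$) and $x_{k+1} = (1-\xi)z_k + \xi z_{k-1}$.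 *)

theory Defs
  imports "HOL-Analysis.Analysis" "HOL-Probability.Probability"
begin

text \<open>Rows a_0,...,a_(m-1) of A (vectors in R^n), right-hand side b.\<close>

definition feasible_set :: "nat \<Rightarrow> (nat \<Rightarrow> real^'n) \<Rightarrow> (nat \<Rightarrow> real) \<Rightarrow> (real^'n) set" where
  "feasible_set m a b = {x. \<forall>i<m. a i \<bullet> x \<le> b i}"

definition resid :: "(nat \<Rightarrow> real^'n) \<Rightarrow> (nat \<Rightarrow> real) \<Rightarrow> real^'n \<Rightarrow> nat \<Rightarrow> real" where
  "resid a b x i = max (a i \<bullet> x - b i) 0"

definition row_subsets :: "nat \<Rightarrow> nat \<Rightarrow> nat set set" where
  "row_subsets m \<beta> = {\<tau>. \<tau> \<subseteq> {..<m} \<and> card \<tau> = \<beta>}"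

definition istar :: "(nat \<Rightarrow> real^'n) \<Rightarrow> (nat \<Rightarrow> real) \<Rightarrow> real^'n \<Rightarrow> nat set \<Rightarrow> nat" where
  "istar a b x \<tau> = (LEAST i. i \<in> \<tau> \<and> (\<forall>j\<in>\<tau>. resid a b x j \<le> resid a b x i))"

definition f_obj :: "nat \<Rightarrow> nat \<Rightarrow> (nat \<Rightarrow> real^'n) \<Rightarrow> (nat \<Rightarrow> real) \<Rightarrow> real^'n \<Rightarrow> real" where
  "f_obj m \<beta> a b x = measure_pmf.expectation (pmf_of_set (row_subsets m \<beta>))
      (\<lambda>\<tau>. (1/2) * (resid a b x (istar a b x \<tau>))\<^sup>2)"

text \<open>A^T A = sum_i a_i a_i^T.\<close>
definition gram :: "nat \<Rightarrow> (nat \<Rightarrow> real^'n) \<Rightarrow> real^'n^'n" where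
  "gram m a = (\<chi> i j. \<Sum>l<m. a l $ i * a l $ j)"

definition lambda_max :: "real^'n^'n \<Rightarrow> real" where
  "lambda_max M = Max {c. \<exists>v. v \<noteq> 0 \<and> M *v v = c *\<^sub>R v}"

definition mu2 :: "nat \<Rightarrow> nat \<Rightarrow> (nat \<Rightarrow> real^'n) \<Rightarrow> real" where
  "mu2 m \<beta> a = min 1 (real \<beta> / real m * lambda_max (gram m a))"

text \<open>One GSKM step. State (x_k, z_{k-1}); with sampled set tau:
  z_k = x_k - delta (a_{i*}^T x_k - b_{i*})^+ a_{i*},  x_{k+1} = (1-xi) z_k + xi z_{k-1}.
  New state (x_{k+1}, z_k).\<close>
definition gskm_step :: "(nat \<Rightarrow> real^'n) \<Rightarrow> (nat \<Rightarrow> real) \<Rightarrow> real \<Rightarrow> real \<Rightarrow>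
    ((real^'n) \<times> (real^'n)) \<Rightarrow> nat set \<Rightarrow> ((real^'n) \<times> (real^'n))" where
  "gskm_step a b \<delta> \<xi> st \<tau> =
     (let x = fst st; zprev = snd st; i = istar a b x \<tau>;
          z = x - (\<delta> * resid a b x i) *\<^sub>R a i
      in ((1 - \<xi>) *\<^sub>R z + \<xi> *\<^sub>R zprev, z))"

text \<open>x_l given the list of sampled sets ts = [tau_1, tau_2, ...]: x_1 = x_0, z_0 = x_0,
  and x_l is obtained after the first l-1 steps.\<close>
definition gskm_x :: "(nat \<Rightarrow> real^'n) \<Rightarrow> (nat \<Rightarrow> real) \<Rightarrow> real \<Rightarrow> real \<Rightarrow> real^'n \<Rightarrow>
    nat set list \<Rightarrow> nat \<Rightarrow> real^'n" where
  "gskm_x a b \<delta> \<xi> x0 ts l = fst (foldl (gskm_step a b \<delta> \<xi>) (x0, x0) (take (l - 1) ts))"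

text \<open>Sample space for the first n iterations: i.i.d. uniform choices of beta-subsets.\<close>
definition choice_lists :: "nat \<Rightarrow> nat \<Rightarrow> nat \<Rightarrow> nat set list set" where
  "choice_lists m \<beta> n = {ts. length ts = n \<and> set ts \<subseteq> row_subsets m \<beta>}"

end

theory Submission
  imports Defs
begin

(* Let p be the projection of x_0 onto P and g_k the gradient at x_k of the sampled loss
   f_tau(x) = (1/2) ((a_j^T x - b_j)^+)^2, j the greedy row of tau at x_k.  The vector
   W_k = x_k + xi z_(k-1) - (1 + xi) p satisfies W_(k+1) = W_k - delta g_k.  Expanding
   |W_(k+1)|^2, feasibility of p gives g_k . (x_k - p) >= |g_k|^2 = 2 f_tau(x_k), and the momentum
   term g_k . (x_k - z_(k-1)) is bounded below by convexity of f_tau and |g_k + g_(k-1)|^2 >= 0.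
   The sample at step k is independent of x_k, so in expectation f_tau(x_k) becomes f(x_k); the
   resulting sum telescopes to
     2 delta (2 + 2 xi + 2 delta xi - delta) sum_(l <= k) E f(x_l)
       <= (1 + xi)^2 d(x_0, P)^2 - 2 delta xi (1 - delta) f(x_0),
   and Jensen's inequality for the convex f bounds E f(xbar_k) by the average.  Since xi <= 0 and
   mu_2 >= 0 (A^T A is positive semidefinite), this numerator is at most the stated one. *)

section \<open>Eigenvalues of symmetric matrices\<close>

definition real_eigenvalues :: "real^'n^'n \<Rightarrow> real set" where
  "real_eigenvalues M = {c. \<exists>v. v \<noteq> 0 \<and> M *v v = c *\<^sub>R v}"

lemma lambda_max_eq_Max_real_eigenvalues: "lambda_max M = Max (real_eigenvalues M)"
  by (simp add: lambda_max_def real_eigenvalues_def)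

lemma symmetric_matrix_inner_commute:
  fixes M :: "real^'n^'n"
  assumes "transpose M = M"
  shows "(M *v v) \<bullet> w = v \<bullet> (M *v w)"
  by (metis assms dot_lmul_matrix vector_transpose_matrix)

lemma finite_real_eigenvalues_symmetric:
  fixes M :: "real^'n^'n"
  assumes sym: "transpose M = M"
  shows "finite (real_eigenvalues M)"
proof -
  define ev where "ev c = (SOME v. v \<noteq> 0 \<and> M *v v = c *\<^sub>R v)" for c
  have ev: "ev c \<noteq> 0 \<and> M *v ev c = c *\<^sub>R ev c" if "c \<in> real_eigenvalues M" for c
    unfolding ev_def by (rule someI_ex) (use that in \<open>simp add: real_eigenvalues_def\<close>)
  have orth: "ev c \<bullet> ev d = 0"
    if "c \<in> real_eigenvalues M" "d \<in> real_eigenvalues M" "c \<noteq> d" for c d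
  proof -
    have "c * (ev c \<bullet> ev d) = (M *v ev c) \<bullet> ev d" using ev[OF that(1)] by simp
    also have "\<dots> = ev c \<bullet> (M *v ev d)" by (rule symmetric_matrix_inner_commute[OF sym])
    also have "\<dots> = d * (ev c \<bullet> ev d)" using ev[OF that(2)] by simp
    finally show ?thesis using that(3) by simp
  qed
  have "inj_on ev (real_eigenvalues M)"
    by (rule inj_onI) (metis ev orth inner_eq_zero_iff)
  moreover have "independent (ev ` real_eigenvalues M)"
    using ev orth
    by (intro pairwise_orthogonal_independent) (auto simp: pairwise_def orthogonal_def)
  then have "finite (ev ` real_eigenvalues M)" using independent_bound by blast
  ultimately show ?thesis using finite_imageD by blast
qed

(* The maximum c of the quadratic form on the unit sphere is an eigenvalue: if it is attained
   at v0, then perturbing v0 by t u with u = M v0 - c v0 gives 2 t |u|^2 <= t^2 K for all t > 0,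
   which forces u = 0. *)
lemma symmetric_real_eigenvalue_ge_quadratic_form:
  fixes M :: "real^'n^'n" and v :: "real^'n"
  assumes sym: "transpose M = M" and v: "norm v = 1"
  shows "\<exists>c\<in>real_eigenvalues M. (M *v v) \<bullet> v \<le> c"
proof -
  define Q where "Q w = (M *v w) \<bullet> w" for w :: "real^'n"
  have "continuous_on (sphere 0 1) Q"
    unfolding Q_def by (intro continuous_intros linear_continuous_on matrix_vector_mul_linear)
  then obtain v0 where v0: "v0 \<in> sphere 0 1" and max: "\<And>w. w \<in> sphere 0 1 \<Longrightarrow> Q w \<le> Q v0"
    using continuous_attains_sup[OF compact_sphere] v by (metis empty_iff mem_sphere_0)
  define c where "c = Q v0"
  have Q_le: "Q w \<le> c * (norm w)\<^sup>2" for w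
  proof (cases "w = 0")
    case False
    then have "Q (inverse (norm w) *\<^sub>R w) \<le> c" using max by (simp add: c_def)
    then show ?thesis
      using False by (simp add: Q_def matrix_vector_mult_scaleR field_simps power2_eq_square)
  qed (simp add: Q_def)
  define u where "u = M *v v0 - c *\<^sub>R v0"
  have perturb: "2 * t * (u \<bullet> u) \<le> t\<^sup>2 * (c * (u \<bullet> u) - Q u)" if "t > 0" for t
  proof -
    have "v0 \<bullet> v0 = 1" using v0 power2_norm_eq_inner[of v0] by simp
    then have "(norm (v0 + t *\<^sub>R u))\<^sup>2 = 1 + 2 * t * (v0 \<bullet> u) + t\<^sup>2 * (u \<bullet> u)"
      unfolding power2_norm_eq_inner
      by (simp add: inner_add_left inner_add_right inner_commute power2_eq_square algebra_simps)
    moreover have "Q (v0 + t *\<^sub>R u) = c + 2 * t * ((M *v v0) \<bullet> u) + t\<^sup>2 * Q u"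
      using symmetric_matrix_inner_commute[OF sym, of u v0]
      by (simp add: Q_def c_def matrix_vector_right_distrib matrix_vector_mult_scaleR
          inner_add_left inner_add_right inner_commute power2_eq_square algebra_simps)
    moreover have "(M *v v0) \<bullet> u - c * (v0 \<bullet> u) = u \<bullet> u"
      by (simp add: u_def inner_diff_left)
    ultimately show ?thesis
      using Q_le[of "v0 + t *\<^sub>R u"] by (simp add: algebra_simps)
  qed
  have "u \<bullet> u = 0"
  proof (rule ccontr)
    define K where "K = c * (u \<bullet> u) - Q u"
    assume "u \<bullet> u \<noteq> 0"
    then have uu: "u \<bullet> u > 0" by (simp add: order_le_neq_trans)
    define t where "t = (u \<bullet> u) / (\<bar>K\<bar> + 1)"
    have t: "t > 0" using uu by (simp add: t_def)
    have "2 * (u \<bullet> u) \<le> t * K"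
      using perturb[OF t] t by (simp add: K_def power2_eq_square)
    also have "\<dots> < u \<bullet> u" using uu by (simp add: t_def field_simps abs_if)
    finally show False using uu by simp
  qed
  then have "M *v v0 = c *\<^sub>R v0" by (simp add: u_def)
  moreover have "v0 \<noteq> 0" using v0 by auto
  ultimately have "c \<in> real_eigenvalues M" by (auto simp: real_eigenvalues_def)
  moreover have "Q v \<le> c" using max v by (simp add: c_def)
  ultimately show ?thesis by (auto simp: Q_def)
qed

lemma lambda_max_nonneg_if_psd:
  fixes M :: "real^'n^'n"
  assumes sym: "transpose M = M" and psd: "\<And>v. 0 \<le> (M *v v) \<bullet> v"
  shows "0 \<le> lambda_max M"
proof -
  obtain c where "c \<in> real_eigenvalues M" "(M *v axis undefined 1) \<bullet> axis undefined 1 \<le> c"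
    using symmetric_real_eigenvalue_ge_quadratic_form[OF sym norm_axis_1] by blast
  then show ?thesis
    using psd finite_real_eigenvalues_symmetric[OF sym]
    by (metis Max_ge lambda_max_eq_Max_real_eigenvalues order_trans)
qed

lemma gram_mult_vector: "gram m a *v v = (\<Sum>l<m. (a l \<bullet> v) *\<^sub>R a l)"
proof -
  have "(gram m a *v v) $ i = (\<Sum>l<m. (a l \<bullet> v) * a l $ i)" for i
  proof -
    have "(gram m a *v v) $ i = (\<Sum>j\<in>UNIV. \<Sum>l<m. a l $ i * (a l $ j * v $ j))"
      by (simp add: matrix_vector_mult_def gram_def sum_distrib_right mult.assoc)
    then show ?thesis
      by (simp add: sum.swap[of _ UNIV] inner_vec_def sum_distrib_left mult.commute)
  qed
  then show ?thesis by (simp add: vec_eq_iff sum_component)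
qed

lemma transpose_gram: "transpose (gram m a) = gram m a"
  by (simp add: transpose_def gram_def mult.commute)

lemma mu2_nonneg: "0 \<le> mu2 m \<beta> a"
proof -
  have "0 \<le> lambda_max (gram m a)"
    by (rule lambda_max_nonneg_if_psd[OF transpose_gram])
      (simp add: gram_mult_vector inner_sum_left sum_nonneg)
  then show ?thesis by (simp add: mu2_def)
qed

section \<open>The sampled loss and its subgradient\<close>

definition sampled_loss ::
    "(nat \<Rightarrow> real^'n) \<Rightarrow> (nat \<Rightarrow> real) \<Rightarrow> real^'n \<Rightarrow> nat set \<Rightarrow> real" where
  "sampled_loss a b x \<tau> = (1/2) * (resid a b x (istar a b x \<tau>))\<^sup>2"

definition sampled_grad ::
    "(nat \<Rightarrow> real^'n) \<Rightarrow> (nat \<Rightarrow> real) \<Rightarrow> real^'n \<Rightarrow> nat set \<Rightarrow> real^'n" where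
  "sampled_grad a b x \<tau> = resid a b x (istar a b x \<tau>) *\<^sub>R a (istar a b x \<tau>)"

lemma istar_maximizes_resid:
  assumes "finite \<tau>" "\<tau> \<noteq> {}"
  shows "istar a b x \<tau> \<in> \<tau> \<and> (\<forall>j\<in>\<tau>. resid a b x j \<le> resid a b x (istar a b x \<tau>))"
proof -
  have "Max (resid a b x ` \<tau>) \<in> resid a b x ` \<tau>" using assms by (intro Max_in) auto
  then obtain i where "i \<in> \<tau>" "resid a b x i = Max (resid a b x ` \<tau>)" by auto
  then have "\<exists>i. i \<in> \<tau> \<and> (\<forall>j\<in>\<tau>. resid a b x j \<le> resid a b x i)"
    using assms by auto
  then show ?thesis unfolding istar_def by (rule LeastI_ex)
qed

lemma half_sq_pos_part_subgradient:
  fixes s t :: real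
  shows "(1/2) * (max s 0)\<^sup>2 + max s 0 * (t - s) \<le> (1/2) * (max t 0)\<^sup>2"
proof -
  have "0 \<le> (t - s)\<^sup>2" by simp
  then show ?thesis
    by (cases "s \<le> 0"; cases "t \<le> 0")
      (auto simp: max_def power2_eq_square algebra_simps mult_nonneg_nonpos)
qed

lemma sampled_loss_subgradient:
  assumes "finite \<tau>" "\<tau> \<noteq> {}"
  shows "sampled_loss a b x \<tau> + sampled_grad a b x \<tau> \<bullet> (y - x) \<le> sampled_loss a b y \<tau>"
proof -
  let ?i = "istar a b x \<tau>"
  let ?d = "(a ?i \<bullet> y - b ?i) - (a ?i \<bullet> x - b ?i)"
  have "resid a b y ?i \<le> resid a b y (istar a b y \<tau>)"
    using istar_maximizes_resid[OF assms] by blast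
  then have "(resid a b y ?i)\<^sup>2 \<le> (resid a b y (istar a b y \<tau>))\<^sup>2"
    by (rule power_mono) (simp add: resid_def)
  moreover have "(1/2) * (resid a b x ?i)\<^sup>2 + resid a b x ?i * ?d \<le> (1/2) * (resid a b y ?i)\<^sup>2"
    unfolding resid_def by (rule half_sq_pos_part_subgradient)
  moreover have "sampled_grad a b x \<tau> \<bullet> (y - x) = resid a b x ?i * ?d"
    by (simp add: sampled_grad_def inner_diff_right right_diff_distrib)
  ultimately show ?thesis by (simp add: sampled_loss_def)
qed

lemma sampled_grad_inner_ge:
  assumes "finite \<tau>" "\<tau> \<noteq> {}" "\<forall>i\<in>\<tau>. a i \<bullet> xs \<le> b i"
  shows "2 * sampled_loss a b x \<tau> \<le> sampled_grad a b x \<tau> \<bullet> (x - xs)"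
proof -
  let ?i = "istar a b x \<tau>"
  have "a ?i \<bullet> xs \<le> b ?i" using assms istar_maximizes_resid[OF assms(1,2)] by blast
  then have "resid a b x ?i * (a ?i \<bullet> x - b ?i) \<le> resid a b x ?i * (a ?i \<bullet> x - a ?i \<bullet> xs)"
    by (intro mult_left_mono) (auto simp: resid_def)
  moreover have "resid a b x ?i * (a ?i \<bullet> x - b ?i) = (resid a b x ?i)\<^sup>2"
    by (simp add: resid_def max_def power2_eq_square)
  ultimately show ?thesis
    by (simp add: sampled_loss_def sampled_grad_def inner_diff_right right_diff_distrib)
qed

lemma norm_sampled_grad_sq:
  assumes "finite \<tau>" "\<tau> \<noteq> {}" "\<forall>i\<in>\<tau>. norm (a i) = 1"
  shows "(norm (sampled_grad a b x \<tau>))\<^sup>2 = 2 * sampled_loss a b x \<tau>"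
proof -
  have "norm (a (istar a b x \<tau>)) = 1"
    using assms istar_maximizes_resid[OF assms(1,2)] by blast
  then show ?thesis by (simp add: sampled_grad_def sampled_loss_def power_mult_distrib)
qed

lemma subgradient_jensen:
  fixes F :: "'a::real_inner \<Rightarrow> real"
  assumes subgrad: "\<And>x y. F x + g x \<bullet> (y - x) \<le> F y" and I: "finite I" "I \<noteq> {}"
  shows "F ((1 / card I) *\<^sub>R (\<Sum>i\<in>I. y i)) \<le> (\<Sum>i\<in>I. F (y i)) / card I"
proof -
  define c where "c = (1 / card I) *\<^sub>R (\<Sum>i\<in>I. y i)"
  have "(\<Sum>i\<in>I. g c \<bullet> (y i - c)) = g c \<bullet> ((\<Sum>i\<in>I. y i) - card I *\<^sub>R c)"
    by (simp add: inner_sum_right[symmetric] sum_subtractf sum_constant_scaleR)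
  also have "\<dots> = 0" using I by (simp add: c_def)
  finally have "card I * F c = (\<Sum>i\<in>I. F c + g c \<bullet> (y i - c))"
    by (simp add: sum.distrib)
  also have "\<dots> \<le> (\<Sum>i\<in>I. F (y i))" by (intro sum_mono subgrad)
  moreover have "0 < real (card I)" using I by (simp add: card_gt_0_iff)
  ultimately show ?thesis by (simp add: c_def pos_le_divide_eq mult.commute)
qed

lemma row_subset_props:
  assumes "\<tau> \<in> row_subsets m \<beta>" "1 \<le> \<beta>"
  shows "finite \<tau>" "\<tau> \<noteq> {}" "\<tau> \<subseteq> {..<m}"
  using assms by (auto simp: row_subsets_def intro: finite_subset)

lemma finite_row_subsets: "finite (row_subsets m \<beta>)"
  unfolding row_subsets_def by (rule finite_subset[of _ "Pow {..<m}"]) auto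

lemma row_subsets_nonempty: "\<beta> \<le> m \<Longrightarrow> row_subsets m \<beta> \<noteq> {}"
  by (auto simp: row_subsets_def intro!: exI[of _ "{..<\<beta>}"])

lemma f_obj_eq_average:
  assumes "\<beta> \<le> m"
  shows "f_obj m \<beta> a b x
    = (\<Sum>\<tau>\<in>row_subsets m \<beta>. sampled_loss a b x \<tau>) / card (row_subsets m \<beta>)"
  unfolding f_obj_def sampled_loss_def
  by (rule integral_pmf_of_set[OF row_subsets_nonempty[OF assms] finite_row_subsets])

lemma f_obj_nonneg: "\<beta> \<le> m \<Longrightarrow> 0 \<le> f_obj m \<beta> a b x"
  by (simp add: f_obj_eq_average sampled_loss_def sum_nonneg)

lemma f_obj_average_le:
  assumes "1 \<le> \<beta>" "\<beta> \<le> m" "1 \<le> k"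
  shows "f_obj m \<beta> a b ((1 / real k) *\<^sub>R (\<Sum>l = 1..k. y l))
    \<le> (\<Sum>l = 1..k. f_obj m \<beta> a b (y l)) / k"
proof -
  let ?S = "row_subsets m \<beta>"
  define g where "g x = (1 / card ?S) *\<^sub>R (\<Sum>\<tau>\<in>?S. sampled_grad a b x \<tau>)" for x
  have "f_obj m \<beta> a b x + g x \<bullet> (y - x) \<le> f_obj m \<beta> a b y" for x y
  proof -
    have "(\<Sum>\<tau>\<in>?S. sampled_loss a b x \<tau> + sampled_grad a b x \<tau> \<bullet> (y - x))
        \<le> (\<Sum>\<tau>\<in>?S. sampled_loss a b y \<tau>)"
      using row_subset_props assms(1) by (intro sum_mono sampled_loss_subgradient) auto
    then have "(\<Sum>\<tau>\<in>?S. sampled_loss a b x \<tau> + sampled_grad a b x \<tau> \<bullet> (y - x)) / card ?S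
        \<le> (\<Sum>\<tau>\<in>?S. sampled_loss a b y \<tau>) / card ?S"
      by (rule divide_right_mono) simp
    then show ?thesis
      using assms(2)
      by (simp add: f_obj_eq_average g_def sum.distrib inner_sum_left add_divide_distrib)
  qed
  from subgradient_jensen[of "f_obj m \<beta> a b" g, OF this, of "{1..k}" y] show ?thesis
    using assms(3) by simp
qed

section \<open>Sums over the sampled index lists\<close>

lemma choice_lists_eq_lists_length:
  "choice_lists m \<beta> n = {ts. set ts \<subseteq> row_subsets m \<beta> \<and> length ts = n}"
  by (auto simp: choice_lists_def)

lemma finite_choice_lists: "finite (choice_lists m \<beta> n)"
  unfolding choice_lists_eq_lists_length by (rule finite_lists_length_eq[OF finite_row_subsets])

lemma card_choice_lists: "card (choice_lists m \<beta> n) = card (row_subsets m \<beta>) ^ n"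
  unfolding choice_lists_eq_lists_length by (rule card_lists_length_eq[OF finite_row_subsets])

lemma sum_choice_lists_Suc:
  "(\<Sum>ts\<in>choice_lists m \<beta> (Suc n). F ts)
    = (\<Sum>\<tau>\<in>row_subsets m \<beta>. \<Sum>ts\<in>choice_lists m \<beta> n. F (\<tau> # ts))"
proof -
  have "(\<Sum>ts\<in>choice_lists m \<beta> (Suc n). F ts)
      = (\<Sum>(ts, \<tau>)\<in>choice_lists m \<beta> n \<times> row_subsets m \<beta>. F (\<tau> # ts))"
    unfolding choice_lists_eq_lists_length lists_length_Suc_eq
    by (subst sum.reindex) (auto simp: inj_on_def split_def)
  then show ?thesis
    by (simp add: sum.cartesian_product[symmetric] sum.swap[of _ "choice_lists m \<beta> n"])
qed

lemma sum_choice_lists_add: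
  "(\<Sum>ts\<in>choice_lists m \<beta> (p + q). F ts)
    = (\<Sum>u\<in>choice_lists m \<beta> p. \<Sum>v\<in>choice_lists m \<beta> q. F (u @ v))"
proof (induction p arbitrary: F)
  case 0
  have "choice_lists m \<beta> 0 = {[]}" by (auto simp: choice_lists_def)
  then show ?case by simp
next
  case (Suc p)
  then show ?case by (simp add: sum_choice_lists_Suc)
qed

lemma sum_choice_lists_take:
  "(\<Sum>ts\<in>choice_lists m \<beta> (n + r). G (take n ts))
    = of_nat (card (row_subsets m \<beta>) ^ r) * (\<Sum>ts\<in>choice_lists m \<beta> n. G ts)"
proof -
  have "(\<Sum>ts\<in>choice_lists m \<beta> (n + r). G (take n ts))
      = (\<Sum>u\<in>choice_lists m \<beta> n. \<Sum>v\<in>choice_lists m \<beta> r. G u)"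
    unfolding sum_choice_lists_add by (auto intro!: sum.cong simp: choice_lists_def)
  then show ?thesis by (simp add: card_choice_lists sum_distrib_left)
qed

(* The j-th sampled set is independent of the earlier ones. *)
lemma sum_choice_lists_nth:
  assumes "j < n"
  shows "of_nat (card (row_subsets m \<beta>)) * (\<Sum>ts\<in>choice_lists m \<beta> n. P (ts ! j) (take j ts))
    = (\<Sum>ts\<in>choice_lists m \<beta> n. \<Sum>\<tau>\<in>row_subsets m \<beta>. P \<tau> (take j ts))"
proof -
  let ?S = "row_subsets m \<beta>" and ?C = "choice_lists m \<beta>"
  obtain q where n: "n = j + Suc q" using assms less_iff_Suc_add by auto
  have "(\<Sum>ts\<in>?C n. P (ts ! j) (take j ts)) = (\<Sum>u\<in>?C j. \<Sum>v\<in>?C (Suc q). P (v ! 0) u)"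
    unfolding n sum_choice_lists_add by (simp add: choice_lists_def nth_append)
  also have "\<dots> = of_nat (card (?C q)) * (\<Sum>u\<in>?C j. \<Sum>\<tau>\<in>?S. P \<tau> u)"
    by (simp add: sum_choice_lists_Suc sum_distrib_left)
  finally have "of_nat (card ?S) * (\<Sum>ts\<in>?C n. P (ts ! j) (take j ts))
      = of_nat (card (?C (Suc q))) * (\<Sum>u\<in>?C j. \<Sum>\<tau>\<in>?S. P \<tau> u)"
    by (simp add: card_choice_lists mult.assoc)
  also have "\<dots> = (\<Sum>ts\<in>?C n. \<Sum>\<tau>\<in>?S. P \<tau> (take j ts))"
    using sum_choice_lists_take[where n = j and r = "Suc q" and G = "\<lambda>u. \<Sum>\<tau>\<in>?S. P \<tau> u"]
    by (simp add: n card_choice_lists)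
  finally show ?thesis .
qed

section \<open>The GSKM iteration\<close>

lemma snd_gskm_step:
  "snd (gskm_step a b \<delta> \<xi> p \<tau>) = fst p - \<delta> *\<^sub>R sampled_grad a b (fst p) \<tau>"
  by (simp add: gskm_step_def sampled_grad_def Let_def)

lemma fst_gskm_step:
  "fst (gskm_step a b \<delta> \<xi> p \<tau>) = (1 - \<xi>) *\<^sub>R snd (gskm_step a b \<delta> \<xi> p \<tau>) + \<xi> *\<^sub>R snd p"
  by (simp add: gskm_step_def Let_def)

locale gskm =
  fixes a :: "nat \<Rightarrow> real^'n" and b :: "nat \<Rightarrow> real" and m \<beta> :: nat and \<delta> \<xi> :: real
    and x0 xs :: "real^'n"
  assumes rows_normalized: "\<forall>i<m. norm (a i) = 1"
    and beta: "1 \<le> \<beta>" "\<beta> \<le> m"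
    and xi: "-1 < \<xi>" "\<xi> \<le> 0"
    and delta_pos: "0 < \<delta>"
    and xs_feasible: "xs \<in> feasible_set m a b"
begin

(* Indices are shifted by one against the paper: iterate ts i is x_(i+1), and
   state (take i ts) = (x_(i+1), z_i) with z_0 = x_0. *)
definition state :: "nat set list \<Rightarrow> (real^'n) \<times> (real^'n)" where
  "state ts = foldl (gskm_step a b \<delta> \<xi>) (x0, x0) ts"

definition iterate :: "nat set list \<Rightarrow> nat \<Rightarrow> real^'n" where
  "iterate ts i = fst (state (take i ts))"

definition iterate_loss :: "nat set list \<Rightarrow> nat \<Rightarrow> nat \<Rightarrow> real" where
  "iterate_loss ts j i = sampled_loss a b (iterate ts j) (ts ! i)"

definition momentum :: "nat set list \<Rightarrow> nat \<Rightarrow> real" where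
  "momentum ts i =
    sampled_grad a b (iterate ts i) (ts ! i) \<bullet> (iterate ts i - snd (state (take i ts)))"

definition momentum_bound :: "nat set list \<Rightarrow> nat \<Rightarrow> real" where
  "momentum_bound ts i =
    (1 - \<delta>) * iterate_loss ts (Suc i) (Suc i) - iterate_loss ts i (Suc i) - \<delta> * iterate_loss ts i i"

definition lyapunov :: "(real^'n) \<times> (real^'n) \<Rightarrow> real" where
  "lyapunov p = (norm (fst p + \<xi> *\<^sub>R snd p - (1 + \<xi>) *\<^sub>R xs))\<^sup>2"

definition summed_loss :: "nat \<Rightarrow> nat \<Rightarrow> real" where
  "summed_loss n i = (\<Sum>ts\<in>choice_lists m \<beta> n. f_obj m \<beta> a b (iterate ts i))"

lemma gskm_x_eq_iterate: "gskm_x a b \<delta> \<xi> x0 ts l = iterate ts (l - 1)"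
  by (simp add: gskm_x_def iterate_def state_def)

lemma state_take_Suc:
  "i < length ts \<Longrightarrow> state (take (Suc i) ts) = gskm_step a b \<delta> \<xi> (state (take i ts)) (ts ! i)"
  by (simp add: state_def take_Suc_conv_app_nth)

lemma row_subset_feasible:
  assumes "\<tau> \<in> row_subsets m \<beta>"
  shows "finite \<tau>" "\<tau> \<noteq> {}" "\<forall>i\<in>\<tau>. norm (a i) = 1" "\<forall>i\<in>\<tau>. a i \<bullet> xs \<le> b i"
  using row_subset_props[OF assms beta(1)] rows_normalized xs_feasible
  by (auto simp: feasible_set_def)

lemma card_row_subsets_pos: "0 < card (row_subsets m \<beta>)"
  using finite_row_subsets row_subsets_nonempty[OF beta(2)] by (simp add: card_gt_0_iff)

lemma lyapunov_step:
  fixes p :: "(real^'n) \<times> (real^'n)"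
  assumes sample: "\<tau> \<in> row_subsets m \<beta>"
  defines "x \<equiv> fst p" and "g \<equiv> sampled_grad a b (fst p) \<tau>"
  shows "lyapunov (gskm_step a b \<delta> \<xi> p \<tau>) \<le> lyapunov p
    + (2 * \<delta>\<^sup>2 - 4 * \<delta> * (1 + \<xi>)) * sampled_loss a b x \<tau> + 2 * \<delta> * \<xi> * (g \<bullet> (x - snd p))"
proof -
  note \<tau> = row_subset_feasible[OF sample]
  let ?p' = "gskm_step a b \<delta> \<xi> p \<tau>"
  define w where "w = fst p + \<xi> *\<^sub>R snd p - (1 + \<xi>) *\<^sub>R xs"
  have "fst ?p' + \<xi> *\<^sub>R snd ?p' - (1 + \<xi>) *\<^sub>R xs = w - \<delta> *\<^sub>R g"
    unfolding fst_gskm_step snd_gskm_step by (simp add: w_def g_def algebra_simps)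
  then have "lyapunov ?p' = (norm (w - \<delta> *\<^sub>R g))\<^sup>2"
    by (simp add: lyapunov_def)
  also have "\<dots> = lyapunov p - 2 * \<delta> * (g \<bullet> w) + \<delta>\<^sup>2 * (norm g)\<^sup>2"
    unfolding lyapunov_def w_def[symmetric] power2_norm_eq_inner
    by (simp add: inner_diff_left inner_diff_right inner_commute power2_eq_square algebra_simps)
  finally have "lyapunov ?p' = lyapunov p - 2 * \<delta> * (g \<bullet> w) + \<delta>\<^sup>2 * (norm g)\<^sup>2" .
  moreover have "g \<bullet> w = (1 + \<xi>) * (g \<bullet> (x - xs)) - \<xi> * (g \<bullet> (x - snd p))"
    by (simp add: w_def x_def inner_diff_right inner_add_right algebra_simps)
  moreover have "\<delta> * (1 + \<xi>) * (2 * sampled_loss a b x \<tau>) \<le> \<delta> * (1 + \<xi>) * (g \<bullet> (x - xs))"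
    using xi delta_pos sampled_grad_inner_ge[OF \<tau>(1,2,4)]
    by (intro mult_left_mono) (auto simp: x_def g_def)
  moreover have "(norm g)\<^sup>2 = 2 * sampled_loss a b x \<tau>"
    unfolding g_def x_def by (rule norm_sampled_grad_sq[OF \<tau>(1-3)])
  ultimately show ?thesis using delta_pos by (simp add: algebra_simps power2_eq_square)
qed

lemma lyapunov_iterates:
  assumes "ts \<in> choice_lists m \<beta> n" "j \<le> n"
  shows "lyapunov (state (take j ts)) \<le> (1 + \<xi>)\<^sup>2 * (norm (x0 - xs))\<^sup>2
    + (\<Sum>i<j. (2 * \<delta>\<^sup>2 - 4 * \<delta> * (1 + \<xi>)) * iterate_loss ts i i + 2 * \<delta> * \<xi> * momentum ts i)"
  using assms(2)
proof (induction j)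
  case 0
  have "x0 + \<xi> *\<^sub>R x0 - (1 + \<xi>) *\<^sub>R xs = (1 + \<xi>) *\<^sub>R (x0 - xs)" by (simp add: algebra_simps)
  then show ?case by (simp add: lyapunov_def state_def power_mult_distrib)
next
  case (Suc j)
  have "j < length ts" "ts ! j \<in> row_subsets m \<beta>"
    using assms(1) Suc.prems by (auto simp: choice_lists_def)
  then show ?case
    using Suc lyapunov_step[of "ts ! j" "state (take j ts)"]
    by (simp add: state_take_Suc iterate_loss_def momentum_def iterate_def)
qed

lemma momentum_0: "momentum ts 0 = 0"
  by (simp add: momentum_def iterate_def state_def)

(* Convexity of the sampled loss along x_(i+2) - x_(i+1), together with
   g_(i+1) . g_i >= -(|g_(i+1)|^2 + |g_i|^2) / 2. *)
lemma momentum_Suc_ge: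
  assumes "ts \<in> choice_lists m \<beta> n" "Suc i < n"
  shows "momentum_bound ts i \<le> momentum ts (Suc i)"
proof -
  have len: "i < length ts"
    and \<tau>: "ts ! Suc i \<in> row_subsets m \<beta>" and \<tau>': "ts ! i \<in> row_subsets m \<beta>"
    using assms by (auto simp: choice_lists_def)
  define x where "x = iterate ts (Suc i)"
  define x' where "x' = iterate ts i"
  define g where "g = sampled_grad a b x (ts ! Suc i)"
  define g' where "g' = sampled_grad a b x' (ts ! i)"
  have "snd (state (take (Suc i) ts)) = x' - \<delta> *\<^sub>R g'"
    using len by (simp add: state_take_Suc snd_gskm_step x'_def g'_def iterate_def)
  then have "momentum ts (Suc i) = g \<bullet> (x - (x' - \<delta> *\<^sub>R g'))"
    by (simp add: momentum_def x_def g_def)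
  also have "\<dots> = g \<bullet> (x - x') + \<delta> * (g \<bullet> g')"
    by (simp add: inner_diff_right algebra_simps)
  finally have "momentum ts (Suc i) = g \<bullet> (x - x') + \<delta> * (g \<bullet> g')" .
  moreover have "iterate_loss ts (Suc i) (Suc i) - iterate_loss ts i (Suc i) \<le> g \<bullet> (x - x')"
    using sampled_loss_subgradient[OF row_subset_feasible(1,2)[OF \<tau>], of a b x x']
    by (simp add: iterate_loss_def x_def x'_def g_def inner_diff_right)
  moreover have "- (iterate_loss ts (Suc i) (Suc i) + iterate_loss ts i i) \<le> g \<bullet> g'"
  proof -
    have "0 \<le> (norm (g + g'))\<^sup>2" by simp
    also have "\<dots> = (norm g)\<^sup>2 + 2 * (g \<bullet> g') + (norm g')\<^sup>2"
      unfolding power2_norm_eq_inner by (simp add: inner_add_left inner_add_right inner_commute)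
    finally show ?thesis
      using norm_sampled_grad_sq[OF row_subset_feasible(1-3)[OF \<tau>], of b x]
        norm_sampled_grad_sq[OF row_subset_feasible(1-3)[OF \<tau>'], of b x']
      by (simp add: iterate_loss_def x_def x'_def g_def g'_def)
  qed
  ultimately show ?thesis
    using delta_pos
      mult_left_mono[of "- (iterate_loss ts (Suc i) (Suc i) + iterate_loss ts i i)" "g \<bullet> g'" \<delta>]
    by (simp add: momentum_bound_def algebra_simps)
qed

lemma lyapunov_pathwise_bound:
  assumes ts: "ts \<in> choice_lists m \<beta> (Suc k)"
  shows "0 \<le> (1 + \<xi>)\<^sup>2 * (norm (x0 - xs))\<^sup>2
    + (\<Sum>i<Suc k. (2 * \<delta>\<^sup>2 - 4 * \<delta> * (1 + \<xi>)) * iterate_loss ts i i)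
    + 2 * \<delta> * \<xi> * (\<Sum>i<k. momentum_bound ts i)"
proof -
  have "(\<Sum>i<k. momentum_bound ts i) \<le> (\<Sum>i<Suc k. momentum ts i)"
    unfolding sum.lessThan_Suc_shift momentum_0
    using ts by (auto intro!: sum_mono momentum_Suc_ge)
  moreover have "2 * \<delta> * \<xi> \<le> 0" using delta_pos xi by (simp add: mult_nonneg_nonpos)
  ultimately have "2 * \<delta> * \<xi> * (\<Sum>i<Suc k. momentum ts i) \<le> 2 * \<delta> * \<xi> * (\<Sum>i<k. momentum_bound ts i)"
    by (rule mult_left_mono_neg)
  moreover have "lyapunov (state (take (Suc k) ts)) \<le> (1 + \<xi>)\<^sup>2 * (norm (x0 - xs))\<^sup>2
      + (\<Sum>i<Suc k. (2 * \<delta>\<^sup>2 - 4 * \<delta> * (1 + \<xi>)) * iterate_loss ts i i)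
      + 2 * \<delta> * \<xi> * (\<Sum>i<Suc k. momentum ts i)"
    using lyapunov_iterates[OF ts order_refl]
    by (simp add: sum.distrib sum_distrib_left del: sum.lessThan_Suc)
  moreover have "0 \<le> lyapunov (state (take (Suc k) ts))" by (simp add: lyapunov_def)
  ultimately show ?thesis by linarith
qed

lemma sum_iterate_loss:
  assumes "j \<le> i" "i < n"
  shows "(\<Sum>ts\<in>choice_lists m \<beta> n. iterate_loss ts j i) = summed_loss n j"
proof -
  let ?S = "row_subsets m \<beta>" and ?C = "choice_lists m \<beta> n"
  have "card ?S * (\<Sum>ts\<in>?C. iterate_loss ts j i)
      = (\<Sum>ts\<in>?C. \<Sum>\<tau>\<in>?S. sampled_loss a b (fst (state (take j (take i ts)))) \<tau>)"
    using sum_choice_lists_nth[OF assms(2),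
        where P = "\<lambda>\<tau> u. sampled_loss a b (fst (state (take j u))) \<tau>"] assms(1)
    by (simp add: iterate_loss_def iterate_def min_def)
  also have "\<dots> = (\<Sum>ts\<in>?C. card ?S * f_obj m \<beta> a b (iterate ts j))"
    using assms(1) card_row_subsets_pos
    by (simp add: f_obj_eq_average[OF beta(2)] iterate_def min_def)
  also have "\<dots> = card ?S * summed_loss n j"
    by (simp add: summed_loss_def sum_distrib_left)
  finally show ?thesis using card_row_subsets_pos by simp
qed

lemma sum_momentum_bound:
  assumes "Suc i < n"
  shows "(\<Sum>ts\<in>choice_lists m \<beta> n. momentum_bound ts i)
    = (1 - \<delta>) * summed_loss n (Suc i) - (1 + \<delta>) * summed_loss n i"
proof -
  let ?C = "choice_lists m \<beta> n"
  have "(\<Sum>ts\<in>?C. momentum_bound ts i) = (1 - \<delta>) * (\<Sum>ts\<in>?C. iterate_loss ts (Suc i) (Suc i))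
      - (\<Sum>ts\<in>?C. iterate_loss ts i (Suc i)) - \<delta> * (\<Sum>ts\<in>?C. iterate_loss ts i i)"
    by (simp add: momentum_bound_def sum_subtractf sum_distrib_left)
  then show ?thesis using assms by (simp add: sum_iterate_loss algebra_simps)
qed

lemma expected_lyapunov_bound:
  "2 * \<delta> * (2 + 2 * \<xi> + 2 * \<delta> * \<xi> - \<delta>) * (\<Sum>i<Suc k. summed_loss (Suc k) i)
    \<le> card (choice_lists m \<beta> (Suc k))
      * ((1 + \<xi>)\<^sup>2 * (norm (x0 - xs))\<^sup>2 - 2 * \<delta> * \<xi> * (1 - \<delta>) * f_obj m \<beta> a b x0)"
proof -
  let ?C = "choice_lists m \<beta> (Suc k)" and ?A = "summed_loss (Suc k)"
  define N where "N = real (card ?C)"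
  define C0 where "C0 = (1 + \<xi>)\<^sup>2 * (norm (x0 - xs))\<^sup>2"
  define c1 where "c1 = 2 * \<delta>\<^sup>2 - 4 * \<delta> * (1 + \<xi>)"
  define T where "T = (\<Sum>i<Suc k. ?A i)"
  have "0 \<le> (\<Sum>ts\<in>?C. C0 + (\<Sum>i<Suc k. c1 * iterate_loss ts i i)
      + 2 * \<delta> * \<xi> * (\<Sum>i<k. momentum_bound ts i))"
    unfolding C0_def c1_def by (intro sum_nonneg lyapunov_pathwise_bound)
  also have "\<dots> = N * C0 + (\<Sum>i<Suc k. c1 * (\<Sum>ts\<in>?C. iterate_loss ts i i))
      + 2 * \<delta> * \<xi> * (\<Sum>i<k. \<Sum>ts\<in>?C. momentum_bound ts i)"
    by (simp add: N_def sum.distrib sum_distrib_left sum.swap[of _ ?C] del: sum.lessThan_Suc)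
  also have "\<dots> = N * C0 + c1 * T
      + 2 * \<delta> * \<xi> * ((1 - \<delta>) * (\<Sum>i<k. ?A (Suc i)) - (1 + \<delta>) * (\<Sum>i<k. ?A i))"
    by (simp add: T_def sum_iterate_loss sum_momentum_bound sum_subtractf sum_distrib_left
        del: sum.lessThan_Suc)
  also have "\<dots> = N * C0 + c1 * T + 2 * \<delta> * \<xi> * ((1 - \<delta>) * (T - ?A 0) - (1 + \<delta>) * (T - ?A k))"
    using sum.lessThan_Suc_shift[of ?A k] by (simp add: T_def)
  finally have "0 \<le> N * C0 + c1 * T + 2 * \<delta> * \<xi> * ((1 - \<delta>) * (T - ?A 0) - (1 + \<delta>) * (T - ?A k))" .
  moreover have "?A 0 = N * f_obj m \<beta> a b x0"
    by (simp add: summed_loss_def N_def iterate_def state_def)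
  moreover have "2 * \<delta> * \<xi> * ((1 + \<delta>) * ?A k) \<le> 0"
  proof (rule mult_nonpos_nonneg)
    show "2 * \<delta> * \<xi> \<le> 0" using delta_pos xi by (simp add: mult_nonneg_nonpos)
    show "0 \<le> (1 + \<delta>) * ?A k"
      unfolding summed_loss_def using delta_pos f_obj_nonneg[OF beta(2)]
      by (intro mult_nonneg_nonneg sum_nonneg) auto
  qed
  ultimately show ?thesis
    by (simp add: N_def C0_def c1_def T_def algebra_simps power2_eq_square)
qed

lemma f_obj_average_iterates_le:
  "f_obj m \<beta> a b ((1 / real (Suc k)) *\<^sub>R (\<Sum>l = 1..Suc k. gskm_x a b \<delta> \<xi> x0 (take k ts) l))
    \<le> (\<Sum>i<Suc k. f_obj m \<beta> a b (iterate ts i)) / Suc k"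
proof -
  have "(\<Sum>l = 1..Suc k. gskm_x a b \<delta> \<xi> x0 (take k ts) l) = (\<Sum>l = 1..Suc k. iterate ts (l - 1))"
    by (intro sum.cong) (auto simp: gskm_x_eq_iterate iterate_def min_def)
  then have "f_obj m \<beta> a b ((1 / real (Suc k)) *\<^sub>R (\<Sum>l = 1..Suc k. gskm_x a b \<delta> \<xi> x0 (take k ts) l))
      = f_obj m \<beta> a b ((1 / real (Suc k)) *\<^sub>R (\<Sum>l = 1..Suc k. iterate ts (l - 1)))"
    by simp
  also have "\<dots> \<le> (\<Sum>l = 1..Suc k. f_obj m \<beta> a b (iterate ts (l - 1))) / Suc k"
    by (rule f_obj_average_le[OF beta]) simp
  also have "\<dots> = (\<Sum>i<Suc k. f_obj m \<beta> a b (iterate ts i)) / Suc k"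
    using sum.atLeast1_atMost_eq[of "\<lambda>l. f_obj m \<beta> a b (iterate ts (l - 1))" "Suc k"] by simp
  finally show ?thesis .
qed

lemma expected_average_loss_le:
  "measure_pmf.expectation (pmf_of_set (choice_lists m \<beta> k))
     (\<lambda>ts. f_obj m \<beta> a b ((1 / real (Suc k)) *\<^sub>R (\<Sum>l = 1..Suc k. gskm_x a b \<delta> \<xi> x0 ts l)))
   \<le> (\<Sum>i<Suc k. summed_loss (Suc k) i) / (real (Suc k) * card (choice_lists m \<beta> (Suc k)))"
proof -
  let ?F = "\<lambda>ts. f_obj m \<beta> a b ((1 / real (Suc k)) *\<^sub>R (\<Sum>l = 1..Suc k. gskm_x a b \<delta> \<xi> x0 ts l))"
  let ?C = "choice_lists m \<beta>"
  have "0 < card (?C k)"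
    using card_row_subsets_pos by (simp add: card_choice_lists)
  then have "?C k \<noteq> {}" by (metis card.empty less_irrefl)
  then have "measure_pmf.expectation (pmf_of_set (?C k)) ?F = (\<Sum>ts\<in>?C k. ?F ts) / card (?C k)"
    by (rule integral_pmf_of_set[OF _ finite_choice_lists])
  also have "\<dots> = (\<Sum>ts\<in>?C (Suc k). ?F (take k ts)) / card (?C (Suc k))"
    using sum_choice_lists_take[where n = k and r = 1 and G = ?F] card_row_subsets_pos
    by (simp add: card_choice_lists)
  also have "\<dots> \<le> (\<Sum>ts\<in>?C (Suc k). (\<Sum>i<Suc k. f_obj m \<beta> a b (iterate ts i)) / Suc k)
      / card (?C (Suc k))"
    by (intro divide_right_mono sum_mono f_obj_average_iterates_le) simp
  also have "\<dots> = (\<Sum>i<Suc k. summed_loss (Suc k) i) / (real (Suc k) * card (?C (Suc k)))"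
    by (simp add: summed_loss_def sum_divide_distrib[symmetric] sum.swap[of _ "?C (Suc k)"]
        ring_distribs)
  finally show ?thesis .
qed

lemma expected_f_obj_average_le:
  assumes denominator_pos: "0 < 2 + 2 * \<xi> + 2 * \<delta> * \<xi> - \<delta>"
  shows "measure_pmf.expectation (pmf_of_set (choice_lists m \<beta> k))
     (\<lambda>ts. f_obj m \<beta> a b ((1 / real (Suc k)) *\<^sub>R (\<Sum>l = 1..Suc k. gskm_x a b \<delta> \<xi> x0 ts l)))
   \<le> ((1 + \<xi>)\<^sup>2 * (norm (x0 - xs))\<^sup>2 - 2 * \<delta> * \<xi> * (1 - \<delta>) * f_obj m \<beta> a b x0)
     / (real (Suc k) * (2 * \<delta> * (2 + 2 * \<xi> + 2 * \<delta> * \<xi> - \<delta>)))"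
proof -
  define D where "D = 2 * \<delta> * (2 + 2 * \<xi> + 2 * \<delta> * \<xi> - \<delta>)"
  define N where "N = real (card (choice_lists m \<beta> (Suc k)))"
  define X where "X = (1 + \<xi>)\<^sup>2 * (norm (x0 - xs))\<^sup>2 - 2 * \<delta> * \<xi> * (1 - \<delta>) * f_obj m \<beta> a b x0"
  have "0 < D" using delta_pos denominator_pos by (simp add: D_def)
  moreover have "0 < N" using card_row_subsets_pos by (simp add: N_def card_choice_lists)
  moreover have "D * (\<Sum>i<Suc k. summed_loss (Suc k) i) \<le> N * X"
    using expected_lyapunov_bound by (simp add: D_def N_def X_def)
  ultimately have "(\<Sum>i<Suc k. summed_loss (Suc k) i) / (real (Suc k) * N) \<le> X / (real (Suc k) * D)"
    by (simp add: frac_le_eq field_simps del: of_nat_Suc sum.lessThan_Suc)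
  then show ?thesis
    using expected_average_loss_le[of k]
    by (simp add: D_def N_def X_def del: of_nat_Suc sum.lessThan_Suc)
qed

end

lemma closed_feasible_set: "closed (feasible_set m a b)"
proof -
  have "feasible_set m a b = (\<Inter>i<m. {x. a i \<bullet> x \<le> b i})"
    by (auto simp: feasible_set_def)
  then show ?thesis by (simp add: closed_INT closed_halfspace_le)
qed

lemma gskm_denominator_pos:
  fixes \<xi> \<delta> :: real
  assumes "\<xi> \<le> 0" "\<delta> < 2 * (1 + \<xi>) / (1 - 2 * \<xi>)"
  shows "0 < 2 + 2 * \<xi> + 2 * \<delta> * \<xi> - \<delta>"
proof -
  have "\<delta> * (1 - 2 * \<xi>) < 2 * (1 + \<xi>)" using assms by (simp add: field_simps)
  then show ?thesis by (simp add: algebra_simps)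
qed

lemma gskm_numerator_le:
  fixes \<xi> \<delta> \<mu> d f0 :: real
  assumes "-1 < \<xi>" "\<xi> \<le> 0" "0 < \<delta>" "0 \<le> \<mu>" "0 \<le> f0"
  shows "(1 + \<xi>)\<^sup>2 * d\<^sup>2 - 2 * \<delta> * \<xi> * (1 - \<delta>) * f0
    \<le> (1 + \<xi>) * (1 + \<xi> - 2 * \<delta> * \<xi> * \<mu>) * d\<^sup>2 + 2 * \<xi> * \<delta> * (\<delta> * \<xi> - \<delta> - 1) * f0"
proof -
  have "0 \<le> (-\<xi>) * (\<delta> * (1 + \<xi>) * \<mu> * d\<^sup>2)"
    using assms by (intro mult_nonneg_nonneg) auto
  moreover have "0 \<le> (-\<xi>) * (\<delta>\<^sup>2 * (2 - \<xi>) * f0)"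
    using assms by (intro mult_nonneg_nonneg) auto
  ultimately show ?thesis by (simp add: algebra_simps power2_eq_square)
qed

theorem theorem5:
  fixes a :: "nat \<Rightarrow> real^'n" and b :: "nat \<Rightarrow> real" and m \<beta> k :: nat
    and \<xi> \<delta> :: real and x0 :: "real^'n"
  assumes rows_normalized: "\<forall>i<m. norm (a i) = 1"
    and consistent: "feasible_set m a b \<noteq> {}"
    and beta: "1 \<le> \<beta>" "\<beta> \<le> m"
    and k: "1 \<le> k"
    and xi: "-1 < \<xi>" "\<xi> \<le> 0"
    and delta: "0 < \<delta>" "\<delta> < 2 * (1 + \<xi>) / (1 - 2 * \<xi>)"
  shows "measure_pmf.expectation (pmf_of_set (choice_lists m \<beta> (k - 1)))
           (\<lambda>ts. f_obj m \<beta> a b ((1 / real k) *\<^sub>R (\<Sum>l = 1..k. gskm_x a b \<delta> \<xi> x0 ts l)))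
         \<le> ((1 + \<xi>) * (1 + \<xi> - 2 * \<delta> * \<xi> * mu2 m \<beta> a) * (infdist x0 (feasible_set m a b))\<^sup>2
            + 2 * \<xi> * \<delta> * (\<delta> * \<xi> - \<delta> - 1) * f_obj m \<beta> a b x0)
           / (2 * \<delta> * real k * (2 + 2 * \<xi> + 2 * \<delta> * \<xi> - \<delta>))"
proof -
  obtain k' where k': "k = Suc k'" using k by (cases k) auto
  obtain xs where xs: "xs \<in> feasible_set m a b" "infdist x0 (feasible_set m a b) = norm (x0 - xs)"
    using infdist_attains_inf[OF closed_feasible_set consistent, of x0] by (auto simp: dist_norm)
  interpret gskm a b m \<beta> \<delta> \<xi> x0 xs
    using rows_normalized beta xi delta(1) xs(1) by unfold_locales
  have denominator_pos: "0 < 2 + 2 * \<xi> + 2 * \<delta> * \<xi> - \<delta>"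
    using gskm_denominator_pos[OF xi(2) delta(2)] .
  have "measure_pmf.expectation (pmf_of_set (choice_lists m \<beta> (k - 1)))
      (\<lambda>ts. f_obj m \<beta> a b ((1 / real k) *\<^sub>R (\<Sum>l = 1..k. gskm_x a b \<delta> \<xi> x0 ts l)))
    \<le> ((1 + \<xi>)\<^sup>2 * (norm (x0 - xs))\<^sup>2 - 2 * \<delta> * \<xi> * (1 - \<delta>) * f_obj m \<beta> a b x0)
      / (real k * (2 * \<delta> * (2 + 2 * \<xi> + 2 * \<delta> * \<xi> - \<delta>)))"
    using expected_f_obj_average_le[OF denominator_pos, of k'] by (simp only: k' diff_Suc_1)
  also have "\<dots> \<le> ((1 + \<xi>) * (1 + \<xi> - 2 * \<delta> * \<xi> * mu2 m \<beta> a) * (norm (x0 - xs))\<^sup>2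
      + 2 * \<xi> * \<delta> * (\<delta> * \<xi> - \<delta> - 1) * f_obj m \<beta> a b x0)
      / (real k * (2 * \<delta> * (2 + 2 * \<xi> + 2 * \<delta> * \<xi> - \<delta>)))"
    using denominator_pos delta(1)
    by (intro divide_right_mono gskm_numerator_le xi mu2_nonneg f_obj_nonneg beta) simp_all
  finally show ?thesis by (simp add: xs(2) mult_ac)
qed

end
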